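(* Let $m \ge 2$, $n \ge 2$, and for $1 \le i \le m$ let $f_i(x) = x^T A_i x + c_i^T x + d_i$ be quadratics on $\mathbb{R}^n$ with $A_i$ symmetric, where $f_1(x) = \|x\|^2 - 1$. For $2 \le i \le m$ let $U_i > 0$ satisfy $|f_i(x)| \le U_i$ for all $x$ with $\|x\|^2 \le 2$. Then the system $f_i(x) \le 0$, $1 \le i \le m$, is feasible if and only if the following system in the real variables $v_0, x_1,\ldots,x_n, s_1,\ldots,s_m, w_2,\ldots,w_m$ is feasible: $$x^T A_i x + c_i^T v_0 x + d_i v_0^2 + s_i^2 = 0, \quad 1 \le i \le m,$$ $$\frac{s_i^2 + w_i^2}{U_i} - v_0^2 = 0, \quad 2 \le i \le m,$$ $$\|x\|^2 + s_1^2 + \sum_{i=2}^m \frac{s_i^2 + w_i^2}{U_i} + v_0^2 = m+1.$$ *)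

theory Defs
  imports "HOL-Analysis.Analysis"
begin

definition quad :: "real^'n^'n \<Rightarrow> real^'n \<Rightarrow> real \<Rightarrow> real^'n \<Rightarrow> real" where
  "quad A c d x = x \<bullet> (A *v x) + c \<bullet> x + d"

end

theory Submission
  imports Defs
begin

text \<open>
  A feasible point x of the original system satisfies \<open>\<parallel>x\<parallel> \<le> 1\<close>, so every \<open>f\<^sub>i(x)\<close> lies in
  \<open>[-U\<^sub>i, 0]\<close>; taking \<open>v\<^sub>0 = 1\<close>, \<open>s\<^sub>i = \<surd>(-f\<^sub>i(x))\<close> and \<open>w\<^sub>i = \<surd>(U\<^sub>i + f\<^sub>i(x))\<close> makes every weighted
  term \<open>(s\<^sub>i\<^sup>2 + w\<^sub>i\<^sup>2)/U\<^sub>i\<close> equal to 1, which gives the normalisation.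
  Conversely, homogenising \<open>f\<^sub>1 = \<parallel>x\<parallel>\<^sup>2 - 1\<close> turns the first equation into \<open>\<parallel>x\<parallel>\<^sup>2 + s\<^sub>1\<^sup>2 = v\<^sub>0\<^sup>2\<close>,
  and each weighted term equals \<open>v\<^sub>0\<^sup>2\<close>, so the normalisation reads \<open>(m+1) v\<^sub>0\<^sup>2 = m+1\<close>.
  Hence \<open>v\<^sub>0 = \<plusminus>1\<close>, and then \<open>f\<^sub>i(v\<^sub>0 x)\<close> is the homogenised value \<open>-s\<^sub>i\<^sup>2 \<le> 0\<close>.
\<close>

definition hquad :: "real^'n^'n \<Rightarrow> real^'n \<Rightarrow> real \<Rightarrow> real \<Rightarrow> real^'n \<Rightarrow> real" where
  "hquad A c d v x = x \<bullet> (A *v x) + v * (c \<bullet> x) + d * v\<^sup>2"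

definition lifted_system ::
    "nat \<Rightarrow> (nat \<Rightarrow> real^'n^'n) \<Rightarrow> (nat \<Rightarrow> real^'n) \<Rightarrow> (nat \<Rightarrow> real) \<Rightarrow> (nat \<Rightarrow> real) \<Rightarrow>
     real \<Rightarrow> real^'n \<Rightarrow> (nat \<Rightarrow> real) \<Rightarrow> (nat \<Rightarrow> real) \<Rightarrow> bool" where
  "lifted_system m A c d U v x s w \<longleftrightarrow>
     (\<forall>i\<in>{1..m}. hquad (A i) (c i) (d i) v x + (s i)\<^sup>2 = 0) \<and>
     (\<forall>i\<in>{2..m}. ((s i)\<^sup>2 + (w i)\<^sup>2) / U i = v\<^sup>2) \<and>
     norm x ^ 2 + (s 1)\<^sup>2 + (\<Sum>i=2..m. ((s i)\<^sup>2 + (w i)\<^sup>2) / U i) + v\<^sup>2 = real m + 1"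

lemma quad_scaleR_eq_hquad:
  assumes "v\<^sup>2 = 1"
  shows "quad A c d (v *\<^sub>R x) = hquad A c d v x"
  using assms
  by (simp add: quad_def hquad_def matrix_vector_mult_scaleR power2_eq_square)

lemma quad_eqD:
  assumes "\<And>y. quad A c d y = quad A' c' d' y"
  shows "x \<bullet> (A *v x) = x \<bullet> (A' *v x)" and "c \<bullet> x = c' \<bullet> x" and "d = d'"
proof -
  show d: "d = d'" using assms[of 0] by (simp add: quad_def)
  have "x \<bullet> (A *v x) + c \<bullet> x = x \<bullet> (A' *v x) + c' \<bullet> x"
    using assms[of x] d by (simp add: quad_def)
  moreover have "x \<bullet> (A *v x) - c \<bullet> x = x \<bullet> (A' *v x) - c' \<bullet> x"
    using assms[of "(-1) *\<^sub>R x"] d unfolding quad_def matrix_vector_mult_scaleR by simp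
  ultimately show "x \<bullet> (A *v x) = x \<bullet> (A' *v x)" and "c \<bullet> x = c' \<bullet> x"
    by linarith+
qed

lemma hquad_unit_sphere:
  assumes "\<And>y. quad A c d y = norm y ^ 2 - 1"
  shows "hquad A c d v x = norm x ^ 2 - v\<^sup>2"
proof -
  have "quad A c d y = quad (mat 1) 0 (-1) y" for y
    using assms by (simp add: quad_def power2_norm_eq_inner)
  from quad_eqD[OF this] show ?thesis
    by (simp add: hquad_def power2_norm_eq_inner)
qed

lemma feasible_imp_lifted_system:
  assumes "1 \<le> m"
    and unit: "\<And>y. quad (A 1) (c 1) (d 1) y = norm y ^ 2 - 1"
    and Upos: "\<And>i. i \<in> {2..m} \<Longrightarrow> U i > 0"
    and Ubnd: "\<And>i. i \<in> {2..m} \<Longrightarrow> \<bar>quad (A i) (c i) (d i) x\<bar> \<le> U i"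
    and feasible: "\<And>i. i \<in> {1..m} \<Longrightarrow> quad (A i) (c i) (d i) x \<le> 0"
  shows "lifted_system m A c d U 1 x
           (\<lambda>i. sqrt (- quad (A i) (c i) (d i) x)) (\<lambda>i. sqrt (U i + quad (A i) (c i) (d i) x))"
    (is "lifted_system m A c d U 1 x ?s ?w")
proof -
  have s: "(?s i)\<^sup>2 = - quad (A i) (c i) (d i) x" if "i \<in> {1..m}" for i
    using feasible[OF that] by simp
  have weight: "((?s i)\<^sup>2 + (?w i)\<^sup>2) / U i = 1" if i: "i \<in> {2..m}" for i
  proof -
    have "(?w i)\<^sup>2 = U i + quad (A i) (c i) (d i) x" using Ubnd[OF i] by simp
    with s[of i] i Upos[OF i] show ?thesis by simp
  qed
  have "(\<Sum>i=2..m. ((?s i)\<^sup>2 + (?w i)\<^sup>2) / U i) = real m - 1"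
    using weight \<open>1 \<le> m\<close> by (simp add: of_nat_diff)
  moreover have "norm x ^ 2 \<le> 1"
    using feasible[of 1] unit[of x] \<open>1 \<le> m\<close> by simp
  moreover have "hquad (A i) (c i) (d i) 1 x = quad (A i) (c i) (d i) x" for i
    using quad_scaleR_eq_hquad[of 1 "A i" "c i" "d i" x] by simp
  ultimately show ?thesis
    using s weight unit[of x] unfolding lifted_system_def by simp
qed

lemma lifted_system_imp_feasible:
  assumes "1 \<le> m"
    and unit: "\<And>y. quad (A 1) (c 1) (d 1) y = norm y ^ 2 - 1"
    and lifted: "lifted_system m A c d U v x s w"
  shows "\<forall>i\<in>{1..m}. quad (A i) (c i) (d i) (v *\<^sub>R x) \<le> 0"
proof -
  have eq: "\<And>i. i \<in> {1..m} \<Longrightarrow> hquad (A i) (c i) (d i) v x + (s i)\<^sup>2 = 0"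
    and weight: "\<And>i. i \<in> {2..m} \<Longrightarrow> ((s i)\<^sup>2 + (w i)\<^sup>2) / U i = v\<^sup>2"
    and normal: "norm x ^ 2 + (s 1)\<^sup>2 + (\<Sum>i=2..m. ((s i)\<^sup>2 + (w i)\<^sup>2) / U i) + v\<^sup>2 = real m + 1"
    using lifted unfolding lifted_system_def by auto
  have "norm x ^ 2 + (s 1)\<^sup>2 = v\<^sup>2"
    using eq[of 1] \<open>1 \<le> m\<close> hquad_unit_sphere[OF unit] by simp
  moreover have "(\<Sum>i=2..m. ((s i)\<^sup>2 + (w i)\<^sup>2) / U i) = (real m - 1) * v\<^sup>2"
    using weight \<open>1 \<le> m\<close> by (simp add: of_nat_diff)
  ultimately have "(real m + 1) * (v\<^sup>2 - 1) = 0"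
    using normal by (simp add: algebra_simps)
  then have "v\<^sup>2 = 1" by simp
  then show ?thesis
    using eq by (simp add: quad_scaleR_eq_hquad add_eq_0_iff2)
qed

theorem corollary1:
  fixes m :: nat
    and A :: "nat \<Rightarrow> real^'n^'n" and c :: "nat \<Rightarrow> real^'n" and d :: "nat \<Rightarrow> real"
    and U :: "nat \<Rightarrow> real"
  assumes "m \<ge> 2" and "CARD('n) \<ge> 2"
    and sym: "\<And>i. 1 \<le> i \<Longrightarrow> i \<le> m \<Longrightarrow> transpose (A i) = A i"
    and f1: "\<And>x. quad (A 1) (c 1) (d 1) x = norm x ^ 2 - 1"
    and Upos: "\<And>i. 2 \<le> i \<Longrightarrow> i \<le> m \<Longrightarrow> U i > 0"
    and Ubnd: "\<And>i x. 2 \<le> i \<Longrightarrow> i \<le> m \<Longrightarrow> norm x ^ 2 \<le> 2 \<Longrightarrow>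
                 \<bar>quad (A i) (c i) (d i) x\<bar> \<le> U i"
  shows "(\<exists>x. \<forall>i\<in>{1..m}. quad (A i) (c i) (d i) x \<le> 0) \<longleftrightarrow>
         (\<exists>(v0::real) (x::real^'n) (s::nat \<Rightarrow> real) (w::nat \<Rightarrow> real).
            (\<forall>i\<in>{1..m}. x \<bullet> (A i *v x) + v0 * (c i \<bullet> x) + d i * v0 ^ 2 + (s i) ^ 2 = 0) \<and>
            (\<forall>i\<in>{2..m}. ((s i) ^ 2 + (w i) ^ 2) / U i - v0 ^ 2 = 0) \<and>
            norm x ^ 2 + (s 1) ^ 2 + (\<Sum>i=2..m. ((s i) ^ 2 + (w i) ^ 2) / U i) + v0 ^ 2
              = real m + 1)"
proof -
  have "1 \<le> m" using \<open>m \<ge> 2\<close> by simp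
  have "(\<exists>x. \<forall>i\<in>{1..m}. quad (A i) (c i) (d i) x \<le> 0) \<longleftrightarrow>
        (\<exists>v x s w. lifted_system m A c d U v x s w)"
  proof
    assume "\<exists>x. \<forall>i\<in>{1..m}. quad (A i) (c i) (d i) x \<le> 0"
    then obtain x where feasible: "\<forall>i\<in>{1..m}. quad (A i) (c i) (d i) x \<le> 0" by blast
    then have "norm x ^ 2 \<le> 2" using f1[of x] \<open>1 \<le> m\<close> by force
    then show "\<exists>v x s w. lifted_system m A c d U v x s w"
      using feasible_imp_lifted_system[of m A c d U x] f1 Upos Ubnd feasible \<open>1 \<le> m\<close>
      by fastforce
  next
    assume "\<exists>v x s w. lifted_system m A c d U v x s w"
    then show "\<exists>x. \<forall>i\<in>{1..m}. quad (A i) (c i) (d i) x \<le> 0"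
      using lifted_system_imp_feasible[of m A c d] f1 \<open>1 \<le> m\<close> by blast
  qed
  then show ?thesis
    unfolding lifted_system_def hquad_def by simp
qed

end
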